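(* Let $0<\epsilon<1$, $r>0$ be constants, $p_2=\frac{1-\epsilon}{n}$, $p_3=\frac{r}{n\ln n}$, and $K_0=\max\{1,\tfrac{2(9+\epsilon)}{r}\}$. For any given vertex $v_0$ of $\mathbb{G}(n,p_2,p_3)$, $$\Pr\big[|C_{v_0}|\ge K_0\ln n\big]\le n^{I_{\epsilon,r}+o(1)}\qquad(n\to\infty),$$ where $I_{\epsilon,r}=\int_{0}^{\epsilon/r}\big[1-\lambda(\omega)+\ln\lambda(\omega)\big]d\omega=-\frac1r\big[\epsilon-\frac{\epsilon^2}{2}+(1-\epsilon)\ln(1-\epsilon)\big]$ with $\lambda(x)=1-\epsilon+rx$. In particular, if $I_{\epsilon,r}<-1$ then w.h.p. no vertex $v$ has $|C_v|\ge K_0\ln n$.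
   Context: $\mathbb{G}(n,p_2,p_3)$ is the random hypergraph on a vertex set $V$ with $|V|=n$ in which each of the $\binom n2$ possible 2-element edges is present with probability $p_2$ and each of the $\binom n3$ possible 3-element hyperedges is present with probability $p_3$, all independently. Propagation process from a vertex $v$: one maintains a set $\mathcal{Y}_t$ of active vertices and a set $\mathcal{D}_t$ of inactive vertices, with $\mathcal{Y}_0=\{v\}$, $\mathcal{D}_0=\emptyset$; vertices in neither set are unexplored. At time $t=0,1,2,\dots$, while $\mathcal{Y}_t\neq\emptyset$, pick an active vertex $v_t\in\mathcal{Y}_t$ and let $U_t$ be the set of unexplored vertices $u$ such that $\{v_t,u\}$ is a 2-edge or $\{v_t,u,w\}$ is a 3-edge for some $w\in\mathcal{D}_t$; set $\mathcal{Y}_{t+1}=(\mathcal{Y}_t\cup U_t)\setminus\{v_t\}$ and $\mathcal{D}_{t+1}=\mathcal{D}_t\cup\{v_t\}$. The process stops at $T_v=\min\{t:\mathcal{Y}_t=\emptyset\}$, and the propagation component of $v$ is $C_v=\mathcal{D}_{T_v}$, so $|C_v|=T_v$. W.h.p. means with probability tending to 1 as $n\to\infty$. *)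

theory Defs
  imports "HOL-Probability.Probability"
begin

text \<open>Vertex set V = {0..<n}. A hypergraph is given by its edge indicator
  H :: nat set => bool; only 2- and 3-element subsets of V can be edges.\<close>

definition possible_edges :: "nat \<Rightarrow> nat set set" where
  "possible_edges n = {e. e \<subseteq> {..<n} \<and> (card e = 2 \<or> card e = 3)}"

definition random_hypergraph :: "nat \<Rightarrow> real \<Rightarrow> real \<Rightarrow> (nat set \<Rightarrow> bool) pmf" where
  "random_hypergraph n p2 p3 =
     Pi_pmf (possible_edges n) False
       (\<lambda>e. bernoulli_pmf (if card e = 2 then p2 else p3))"

text \<open>One step of the propagation process on state (Y_t, D_t); the active vertex
  picked is the least one (the final set does not depend on the choice).\<close>
definition prop_step :: "nat \<Rightarrow> (nat set \<Rightarrow> bool) \<Rightarrow> nat set \<times> nat set \<Rightarrow> nat set \<times> nat set" where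
  "prop_step n H S =
     (let Y = fst S; D = snd S in
      if Y = {} then (Y, D)
      else let v = Min Y;
               U = {u \<in> {..<n}. u \<notin> Y \<and> u \<notin> D \<and>
                     (H {v, u} \<or> (\<exists>w\<in>D. H {v, u, w}))}
           in ((Y \<union> U) - {v}, insert v D))"

text \<open>The process terminates after at most n steps (each step moves one vertex into D),
  so C_v = D_{T_v} = D_n.\<close>
definition prop_component :: "nat \<Rightarrow> (nat set \<Rightarrow> bool) \<Rightarrow> nat \<Rightarrow> nat set" where
  "prop_component n H v = snd ((prop_step n H ^^ n) ({v}, {}))"

definition I_er :: "real \<Rightarrow> real \<Rightarrow> real" where
  "I_er \<epsilon> r = - (1 / r) * (\<epsilon> - \<epsilon>\<^sup>2 / 2 + (1 - \<epsilon>) * ln (1 - \<epsilon>))"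

end

theory Submission
  imports Defs
begin

text \<open>An exponential supermartingale argument. While t vertices are inactive, the vertex
  explored next activates in expectation at most \<open>\<lambda>\<^sub>t = n p\<^sub>2 + t n p\<^sub>3 = 1 - \<epsilon> + r t / ln n\<close>
  new vertices, and only through edges that no earlier step has inspected, which are independent
  of the past. Hence, with \<open>Y\<close> the active set, \<open>\<lambda>\<^sub>t\<^sub>-\<^sub>1 ^ -(|Y| - 1)\<close> grows in expectation
  by at most the factor \<open>\<lambda>\<^sub>t exp (1 - \<lambda>\<^sub>t)\<close> per step. As \<open>\<lambda>\<^sub>t \<le> 1\<close> during the first
  \<open>T = \<lfloor>(\<epsilon>/r) ln n\<rfloor>\<close> steps, the process survives \<open>T\<close> steps with probability at most
  \<open>exp (\<Sum>\<^sub>t\<^sub><\<^sub>T (1 - \<lambda>\<^sub>t + ln \<lambda>\<^sub>t))\<close>, and this Riemann sum is \<open>I\<^sub>\<epsilon>\<^sub>,\<^sub>r ln n + O(1)\<close>.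
  A union bound over the starting vertex gives the last claim.\<close>

definition prop_state_wf :: "nat \<Rightarrow> nat set \<times> nat set \<Rightarrow> bool" where
  "prop_state_wf n S \<longleftrightarrow> fst S \<inter> snd S = {} \<and> fst S \<subseteq> {..<n} \<and> snd S \<subseteq> {..<n}"

text \<open>Edges with at least two vertices outside \<open>D\<close>: while the inactive set is contained
  in \<open>D\<close>, no step has inspected them.\<close>
definition unexposed_edges :: "nat \<Rightarrow> nat set \<Rightarrow> nat set set" where
  "unexposed_edges n D = {e \<in> possible_edges n. 2 \<le> card (e - D)}"

definition new_vertices :: "nat \<Rightarrow> (nat set \<Rightarrow> bool) \<Rightarrow> nat set \<Rightarrow> nat set \<Rightarrow> nat set" where
  "new_vertices n H Y D = {u \<in> {..<n}. u \<notin> Y \<and> u \<notin> D \<and>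
     (H {Min Y, u} \<or> (\<exists>w\<in>D. H {Min Y, u, w}))}"

lemma prop_step_idle: "prop_step n H ({}, D) = ({}, D)"
  by (simp add: prop_step_def)

lemma prop_iter_idle: "(prop_step n H ^^ j) ({}, D) = ({}, D)"
  by (induction j) (auto simp: prop_step_idle)

lemma prop_step_active:
  "Y \<noteq> {} \<Longrightarrow> prop_step n H (Y, D) = ((Y \<union> new_vertices n H Y D) - {Min Y}, insert (Min Y) D)"
  by (simp add: prop_step_def new_vertices_def Let_def)

lemma prop_state_wf_finite:
  "prop_state_wf n (Y, D) \<Longrightarrow> finite Y \<and> finite D"
  by (auto simp: prop_state_wf_def intro: finite_subset[OF _ finite_lessThan])

lemma prop_state_wf_Min_in: "prop_state_wf n (Y, D) \<Longrightarrow> Y \<noteq> {} \<Longrightarrow> Min Y \<in> Y"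
  using prop_state_wf_finite by (blast intro: Min_in)

lemma prop_state_wf_step: "prop_state_wf n S \<Longrightarrow> prop_state_wf n (prop_step n H S)"
proof (cases S)
  case (Pair Y D)
  assume wf: "prop_state_wf n S"
  show ?thesis
  proof (cases "Y = {}")
    case True
    then show ?thesis using wf Pair by (simp add: prop_step_idle)
  next
    case False
    have "Min Y \<in> Y" using wf Pair False prop_state_wf_Min_in by blast
    then show ?thesis using wf False unfolding Pair
      by (simp add: prop_step_active prop_state_wf_def new_vertices_def) auto
  qed
qed

lemma prop_state_wf_iter: "prop_state_wf n S \<Longrightarrow> prop_state_wf n ((prop_step n H ^^ j) S)"
  by (induction j) (auto intro: prop_state_wf_step)

lemma card_inactive_iter_le:
  assumes "prop_state_wf n S"
  shows "card (snd ((prop_step n H ^^ j) S)) \<le> card (snd S) + j"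
proof (induction j)
  case 0
  then show ?case by simp
next
  case (Suc j)
  obtain Y D where YD: "(prop_step n H ^^ j) S = (Y, D)" by fastforce
  have "finite D" using prop_state_wf_iter[OF assms, where H=H and j=j] YD prop_state_wf_finite by simp
  then have "card (snd (prop_step n H (Y, D))) \<le> Suc (card D)"
    by (cases "Y = {}") (simp_all add: prop_step_idle prop_step_active card_insert_if)
  then show ?case using Suc YD by simp
qed

lemma card_prop_component_le:
  assumes "v0 < n" and "fst ((prop_step n H ^^ T) ({v0}, {})) = {}"
  shows "card (prop_component n H v0) \<le> T"
proof -
  have wf: "prop_state_wf n ({v0}, {})" using assms(1) by (simp add: prop_state_wf_def)
  show ?thesis
  proof (cases "T \<le> n")
    case True
    obtain D where D: "(prop_step n H ^^ T) ({v0}, {}) = ({}, D)"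
      using assms(2) by (cases "(prop_step n H ^^ T) ({v0}, {})") auto
    have "(prop_step n H ^^ n) = (prop_step n H ^^ (n - T)) \<circ> (prop_step n H ^^ T)"
      using True by (simp flip: funpow_add)
    then have "prop_component n H v0 = D" using D by (simp add: prop_component_def prop_iter_idle)
    then show ?thesis using card_inactive_iter_le[OF wf, where H=H and j=T] D by simp
  next
    case False
    then show ?thesis using card_inactive_iter_le[OF wf, where H=H and j=n] by (simp add: prop_component_def)
  qed
qed

lemma unexposed_edges_antimono: "D \<subseteq> D' \<Longrightarrow> unexposed_edges n D' \<subseteq> unexposed_edges n D"
proof
  fix e assume "D \<subseteq> D'" "e \<in> unexposed_edges n D'"
  moreover from this have "finite e"
    by (auto simp: unexposed_edges_def possible_edges_def intro: finite_subset)
  ultimately have "card (e - D') \<le> card (e - D)" by (intro card_mono) auto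
  with \<open>e \<in> unexposed_edges n D'\<close> show "e \<in> unexposed_edges n D"
    by (auto simp: unexposed_edges_def)
qed

lemma pair_edge_exposed:
  assumes "prop_state_wf n (Y, D)" "v \<in> Y" "u < n" "u \<notin> Y" "u \<notin> D"
  shows "{v, u} \<in> unexposed_edges n D - unexposed_edges n (insert v D)"
proof -
  have "v \<noteq> u" "v \<notin> D" "v < n" using assms by (auto simp: prop_state_wf_def)
  moreover have "{v, u} - D = {v, u}" "{v, u} - insert v D = {u}" using calculation assms by auto
  ultimately show ?thesis using assms by (auto simp: unexposed_edges_def possible_edges_def)
qed

lemma triple_edge_exposed:
  assumes "prop_state_wf n (Y, D)" "v \<in> Y" "u < n" "u \<notin> Y" "u \<notin> D" "w \<in> D"
  shows "{v, u, w} \<in> unexposed_edges n D - unexposed_edges n (insert v D)"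
proof -
  have "v \<noteq> u" "v \<notin> D" "v < n" "w < n" "w \<noteq> v" "w \<noteq> u"
    using assms by (auto simp: prop_state_wf_def)
  moreover have "{v, u, w} - D = {v, u}" "{v, u, w} - insert v D = {u}" "card {v, u, w} = 3"
    using calculation assms by auto
  ultimately show ?thesis using assms by (auto simp: unexposed_edges_def possible_edges_def)
qed

lemma prop_step_local:
  assumes "prop_state_wf n (Y, D)" "Y \<noteq> {}"
    and "\<And>e. e \<in> unexposed_edges n D - unexposed_edges n (insert (Min Y) D) \<Longrightarrow> H e = H' e"
  shows "prop_step n H (Y, D) = prop_step n H' (Y, D)"
proof -
  have "Min Y \<in> Y" using assms(1,2) by (rule prop_state_wf_Min_in)
  then have "new_vertices n H Y D = new_vertices n H' Y D"
    unfolding new_vertices_def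
    using assms(3) pair_edge_exposed[OF assms(1)] triple_edge_exposed[OF assms(1)] by auto
  then show ?thesis using assms(2) by (simp add: prop_step_active)
qed

lemma prop_iter_local:
  assumes "prop_state_wf n S" "\<And>e. e \<in> unexposed_edges n (snd S) \<Longrightarrow> H e = H' e"
  shows "(prop_step n H ^^ j) S = (prop_step n H' ^^ j) S"
  using assms
proof (induction j arbitrary: S)
  case 0
  then show ?case by simp
next
  case (Suc j)
  obtain Y D where S: "S = (Y, D)" by fastforce
  have step: "prop_step n H S = prop_step n H' S"
  proof (cases "Y = {}")
    case True
    then show ?thesis by (simp add: S prop_step_idle)
  next
    case False
    then show ?thesis unfolding S
      by (intro prop_step_local) (use Suc.prems S in auto)
  qed
  have "unexposed_edges n (snd (prop_step n H S)) \<subseteq> unexposed_edges n (snd S)"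
    by (intro unexposed_edges_antimono) (auto simp: S prop_step_def Let_def)
  then have "(prop_step n H ^^ j) (prop_step n H S) = (prop_step n H' ^^ j) (prop_step n H S)"
    using Suc.prems by (intro Suc.IH prop_state_wf_step) auto
  then show ?case by (simp only: funpow_Suc_right comp_def step)
qed

definition edge_prob :: "real \<Rightarrow> real \<Rightarrow> nat set \<Rightarrow> real" where
  "edge_prob p2 p3 e = (if card e = 2 then p2 else p3)"

definition edge_pmf :: "real \<Rightarrow> real \<Rightarrow> nat set set \<Rightarrow> (nat set \<Rightarrow> bool) pmf" where
  "edge_pmf p2 p3 A = Pi_pmf A False (\<lambda>e. bernoulli_pmf (edge_prob p2 p3 e))"

lemma finite_possible_edges: "finite (possible_edges n)"
  unfolding possible_edges_def by (rule finite_subset[of _ "Pow {..<n}"]) auto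

lemma finite_unexposed_edges: "finite (unexposed_edges n D)"
  unfolding unexposed_edges_def using finite_possible_edges by auto

lemma random_hypergraph_eq_edge_pmf: "random_hypergraph n p2 p3 = edge_pmf p2 p3 (unexposed_edges n {})"
proof -
  have "unexposed_edges n {} = possible_edges n"
    by (auto simp: unexposed_edges_def possible_edges_def)
  then show ?thesis by (simp add: random_hypergraph_def edge_pmf_def edge_prob_def)
qed

lemma nn_integral_edge_pmf_union:
  assumes "finite A" "finite B" "A \<inter> B = {}"
  shows "(\<integral>\<^sup>+H. F H \<partial>edge_pmf p2 p3 (A \<union> B)) =
         (\<integral>\<^sup>+h1. \<integral>\<^sup>+h2. F (\<lambda>x. if x \<in> A then h1 x else h2 x) \<partial>edge_pmf p2 p3 B \<partial>edge_pmf p2 p3 A)"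
  unfolding edge_pmf_def
  by (subst Pi_pmf_union[OF assms]) (simp add: nn_integral_pair_pmf' case_prod_unfold)

lemma nn_integral_Pi_bernoulli_power_card:
  fixes c :: real
  assumes A: "finite A" and Q: "Q \<subseteq> A" and c: "1 \<le> c"
    and p: "\<And>e. e \<in> A \<Longrightarrow> 0 \<le> p e \<and> p e \<le> 1"
  shows "(\<integral>\<^sup>+h. ennreal (c ^ card {e\<in>Q. h e}) \<partial>Pi_pmf A False (\<lambda>e. bernoulli_pmf (p e)))
    \<le> ennreal (exp ((c - 1) * sum p Q))"
proof -
  define f where "f e x = (if e \<in> Q \<and> x then c else 1)" for e x
  have f_nonneg: "0 \<le> f e x" for e x using c by (simp add: f_def)
  have prod_f: "c ^ card {e\<in>Q. h e} = (\<Prod>e\<in>A. f e (h e))" for h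
  proof -
    have "{e\<in>A. e \<in> Q \<and> h e} = {e\<in>Q. h e}" using Q by auto
    then show ?thesis using A by (simp add: f_def prod.If_cases Int_def)
  qed
  have fin_bernoulli: "finite (set_pmf (bernoulli_pmf q))" for q
    by (rule finite_subset[of _ UNIV]) auto
  have "(\<integral>\<^sup>+h. ennreal (c ^ card {e\<in>Q. h e}) \<partial>Pi_pmf A False (\<lambda>e. bernoulli_pmf (p e)))
      = ennreal (\<integral>h. (\<Prod>e\<in>A. f e (h e)) \<partial>Pi_pmf A False (\<lambda>e. bernoulli_pmf (p e)))"
    unfolding prod_f
    by (intro nn_integral_eq_integral integrable_measure_pmf_finite AE_pmfI
          finite_subset[OF set_Pi_pmf_subset'] finite_PiE_dflt A)
       (auto simp: f_nonneg prod_nonneg)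
  also have "(\<integral>h. (\<Prod>e\<in>A. f e (h e)) \<partial>Pi_pmf A False (\<lambda>e. bernoulli_pmf (p e)))
      = (\<Prod>e\<in>A. \<integral>x. f e x \<partial>bernoulli_pmf (p e))"
    by (subst expectation_prod_Pi_pmf) (auto intro: integrable_measure_pmf_finite fin_bernoulli A f_nonneg)
  also have "\<dots> = (\<Prod>e\<in>A. 1 + (if e \<in> Q then (c - 1) * p e else 0))"
    using p by (intro prod.cong refl) (auto simp: f_def algebra_simps)
  also have "\<dots> \<le> (\<Prod>e\<in>A. exp (if e \<in> Q then (c - 1) * p e else 0))"
    using c p by (intro prod_mono) (auto simp del: exp_ge_add_one_self intro: exp_ge_add_one_self)
  also have "\<dots> = exp (\<Sum>e\<in>A. if e \<in> Q then (c - 1) * p e else 0)"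
    using A by (simp add: exp_sum)
  also have "(\<Sum>e\<in>A. if e \<in> Q then (c - 1) * p e else 0) = (c - 1) * sum p Q"
    using A Q by (simp add: sum.inter_restrict[symmetric] Int_absorb1 sum_distrib_left)
  finally show ?thesis by (simp add: ennreal_leI)
qed

definition branching_rate :: "nat \<Rightarrow> real \<Rightarrow> real \<Rightarrow> nat \<Rightarrow> real" where
  "branching_rate n p2 p3 t = real n * p2 + real n * real t * p3"

text \<open>The potential is \<open>\<lambda> ^ -(|Y| - 1)\<close> for the rate \<open>\<lambda>\<close> of the previous step; the
  truncated \<open>card D - 1\<close> makes it use \<open>\<lambda>(0)\<close> at the start.\<close>
definition potential :: "nat \<Rightarrow> real \<Rightarrow> real \<Rightarrow> nat set \<times> nat set \<Rightarrow> real" where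
  "potential n p2 p3 S = (if fst S = {} then 0
     else exp (- ln (branching_rate n p2 p3 (card (snd S) - 1)) * (real (card (fst S)) - 1)))"

definition drift_factor :: "nat \<Rightarrow> real \<Rightarrow> real \<Rightarrow> nat \<Rightarrow> real" where
  "drift_factor n p2 p3 t =
     exp (1 - branching_rate n p2 p3 t + ln (branching_rate n p2 p3 t))"

lemma potential_nonneg: "0 \<le> potential n p2 p3 S"
  by (simp add: potential_def)

lemma branching_rate_mono: "0 \<le> p3 \<Longrightarrow> s \<le> t \<Longrightarrow> branching_rate n p2 p3 s \<le> branching_rate n p2 p3 t"
  unfolding branching_rate_def by (intro add_left_mono mult_right_mono mult_left_mono) auto

lemma branching_rate_pos: "0 < branching_rate n p2 p3 0 \<Longrightarrow> 0 \<le> p3 \<Longrightarrow> 0 < branching_rate n p2 p3 t"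
  using branching_rate_mono[of p3 0 t n p2] by linarith

locale active_state =
  fixes n :: nat and Y D :: "nat set"
  assumes wf: "prop_state_wf n (Y, D)" and active: "Y \<noteq> {}"
begin

definition pivot :: nat where "pivot = Min Y"

definition fresh :: "nat set" where "fresh = {u \<in> {..<n}. u \<notin> Y \<and> u \<notin> D}"

definition pair_queries :: "nat set set" where "pair_queries = (\<lambda>u. {pivot, u}) ` fresh"

definition triple_queries :: "nat set set" where
  "triple_queries = (\<lambda>(u, w). {pivot, u, w}) ` (fresh \<times> D)"

definition queried_edges :: "nat set set" where "queried_edges = pair_queries \<union> triple_queries"

definition exposed_edges :: "nat set set" where
  "exposed_edges = unexposed_edges n D - unexposed_edges n (insert pivot D)"

lemma pivot_in: "pivot \<in> Y"
  using prop_state_wf_Min_in[OF wf active] by (simp add: pivot_def)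

lemma pivot_notin_D: "pivot \<notin> D"
  using pivot_in wf by (auto simp: prop_state_wf_def)

lemma finite_Y: "finite Y" and finite_D: "finite D" and finite_fresh: "finite fresh"
  using prop_state_wf_finite[OF wf] by (auto simp: fresh_def)

lemma card_insert_pivot: "card (insert pivot D) = Suc (card D)"
  using finite_D pivot_notin_D by simp

lemma finite_exposed_edges: "finite exposed_edges"
  unfolding exposed_edges_def using finite_unexposed_edges by auto

lemma queried_edges_subset: "queried_edges \<subseteq> exposed_edges"
  unfolding queried_edges_def pair_queries_def triple_queries_def exposed_edges_def fresh_def
  using pair_edge_exposed[OF wf pivot_in] triple_edge_exposed[OF wf pivot_in] by auto

lemma finite_queried_edges: "finite queried_edges"
  using finite_subset[OF queried_edges_subset finite_exposed_edges] .

lemma card_fresh_le: "card fresh \<le> n"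
  using card_mono[of "{..<n}" fresh] by (auto simp: fresh_def)

lemma card_pair_queries: "e \<in> pair_queries \<Longrightarrow> card e = 2"
  using pivot_in by (auto simp: pair_queries_def fresh_def card_insert_if)

lemma card_triple_queries: "e \<in> triple_queries \<Longrightarrow> card e = 3"
  using pivot_in pivot_notin_D by (auto simp: triple_queries_def fresh_def card_insert_if)

lemma pair_triple_queries_disjoint: "pair_queries \<inter> triple_queries = {}"
  using card_pair_queries card_triple_queries by fastforce

lemma sum_edge_prob_queried_edges:
  assumes "0 \<le> p2" "0 \<le> p3"
  shows "sum (edge_prob p2 p3) queried_edges \<le> branching_rate n p2 p3 (card D)"
proof -
  have card_pairs: "card pair_queries \<le> n"
    using card_image_le[OF finite_fresh] card_fresh_le unfolding pair_queries_def by (rule le_trans)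
  have "card triple_queries \<le> card (fresh \<times> D)"
    unfolding triple_queries_def by (rule card_image_le) (use finite_fresh finite_D in auto)
  also have "\<dots> \<le> n * card D" using card_fresh_le by (simp add: card_cartesian_product)
  finally have card_triples: "card triple_queries \<le> n * card D" .
  have "sum (edge_prob p2 p3) queried_edges
      = sum (edge_prob p2 p3) pair_queries + sum (edge_prob p2 p3) triple_queries"
    using finite_queried_edges pair_triple_queries_disjoint unfolding queried_edges_def
    by (intro sum.union_disjoint) auto
  also have "\<dots> = real (card pair_queries) * p2 + real (card triple_queries) * p3"
    by (simp add: edge_prob_def card_pair_queries card_triple_queries)
  also have "\<dots> \<le> real n * p2 + real (n * card D) * p3"
    using card_pairs card_triples assms by (intro add_mono mult_right_mono) (auto simp del: of_nat_mult)
  finally show ?thesis by (simp add: branching_rate_def)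
qed

text \<open>Each new vertex is the only vertex outside \<open>insert pivot D\<close> of a present queried edge.\<close>
lemma card_new_vertices_le: "card (new_vertices n h Y D) \<le> card {e\<in>queried_edges. h e}"
proof -
  let ?witness = "\<lambda>e. the_elem (e - insert pivot D)"
  have "new_vertices n h Y D \<subseteq> ?witness ` {e\<in>queried_edges. h e}"
  proof
    fix u assume u: "u \<in> new_vertices n h Y D"
    then have "u \<in> fresh" and present: "h {pivot, u} \<or> (\<exists>w\<in>D. h {pivot, u, w})"
      unfolding new_vertices_def fresh_def pivot_def by auto
    have "pivot \<noteq> u" "u \<notin> D" using \<open>u \<in> fresh\<close> pivot_in by (auto simp: fresh_def)
    show "u \<in> ?witness ` {e\<in>queried_edges. h e}"
    proof (cases "h {pivot, u}")
      case True
      moreover have "{pivot, u} \<in> queried_edges"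
        using \<open>u \<in> fresh\<close> by (auto simp: queried_edges_def pair_queries_def)
      moreover have "{pivot, u} - insert pivot D = {u}" using \<open>pivot \<noteq> u\<close> \<open>u \<notin> D\<close> by auto
      ultimately show ?thesis by (intro image_eqI[of _ _ "{pivot, u}"]) auto
    next
      case False
      then obtain w where "w \<in> D" "h {pivot, u, w}" using present by auto
      moreover have "{pivot, u, w} \<in> queried_edges"
        using \<open>u \<in> fresh\<close> \<open>w \<in> D\<close> by (auto simp: queried_edges_def triple_queries_def)
      moreover have "{pivot, u, w} - insert pivot D = {u}"
        using \<open>pivot \<noteq> u\<close> \<open>u \<notin> D\<close> \<open>w \<in> D\<close> by auto
      ultimately show ?thesis by (intro image_eqI[of _ _ "{pivot, u, w}"]) auto
    qed
  qed
  then have "card (new_vertices n h Y D) \<le> card (?witness ` {e\<in>queried_edges. h e})"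
    using finite_queried_edges by (intro card_mono) auto
  also have "\<dots> \<le> card {e\<in>queried_edges. h e}"
    using finite_queried_edges by (intro card_image_le) auto
  finally show ?thesis .
qed

lemma prop_step_state:
  "snd (prop_step n h (Y, D)) = insert pivot D"
  "card (snd (prop_step n h (Y, D))) = Suc (card D)"
  "card (fst (prop_step n h (Y, D))) = card Y + card (new_vertices n h Y D) - 1"
proof -
  show "snd (prop_step n h (Y, D)) = insert pivot D"
    using active by (simp add: prop_step_active pivot_def)
  then show "card (snd (prop_step n h (Y, D))) = Suc (card D)"
    using card_insert_pivot by simp
  have "Y \<inter> new_vertices n h Y D = {}" by (auto simp: new_vertices_def)
  moreover have "finite (new_vertices n h Y D)" by (simp add: new_vertices_def)
  ultimately have "card (Y \<union> new_vertices n h Y D) = card Y + card (new_vertices n h Y D)"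
    using finite_Y by (simp add: card_Un_disjoint)
  then show "card (fst (prop_step n h (Y, D))) = card Y + card (new_vertices n h Y D) - 1"
    using active pivot_in by (simp add: prop_step_active card_Diff_singleton flip: pivot_def)
qed

lemma potential_step_le:
  fixes p2 p3 :: real
  defines "l \<equiv> branching_rate n p2 p3 (card D)"
  assumes l_pos: "0 < l" and l_le_1: "l \<le> 1"
  shows "potential n p2 p3 (prop_step n h (Y, D))
    \<le> exp (- ln l * (real (card Y) - 2)) * (1 / l) ^ card {e\<in>queried_edges. h e}"
proof (cases "fst (prop_step n h (Y, D)) = {}")
  case True
  then show ?thesis using l_pos by (simp add: potential_def)
next
  case False
  define U where "U = new_vertices n h Y D"
  have card_Y: "1 \<le> card Y" using finite_Y active by (simp add: Suc_le_eq card_gt_0_iff)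
  have "real (card Y + card U - 1) - 1 = (real (card Y) - 2) + real (card U)"
    using card_Y by (simp add: of_nat_diff)
  then have "potential n p2 p3 (prop_step n h (Y, D)) = exp (- ln l * ((real (card Y) - 2) + real (card U)))"
    using False finite_D pivot_notin_D
    by (simp add: potential_def prop_step_state l_def U_def algebra_simps)
  also have "\<dots> = exp (- ln l * (real (card Y) - 2)) * (1 / l) ^ card U"
  proof -
    have "exp (- ln l * real k) = exp (real k * ln (1 / l))" for k
      using l_pos by (simp add: ln_div)
    also have "exp (real k * ln (1 / l)) = (1 / l) ^ k" for k
      using l_pos by (simp add: exp_of_nat_mult)
    finally have "exp (- ln l * real k) = (1 / l) ^ k" for k .
    then show ?thesis unfolding distrib_left exp_add by simp
  qed
  also have "\<dots> \<le> exp (- ln l * (real (card Y) - 2)) * (1 / l) ^ card {e\<in>queried_edges. h e}"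
    using l_pos l_le_1 card_new_vertices_le[of h]
    by (intro mult_left_mono power_increasing) (auto simp: U_def)
  finally show ?thesis .
qed

lemma nn_integral_potential_step:
  assumes p2: "0 \<le> p2" "p2 \<le> 1" and p3: "0 \<le> p3" "p3 \<le> 1"
    and rate_pos: "0 < branching_rate n p2 p3 0" and rate_le_1: "branching_rate n p2 p3 (card D) \<le> 1"
  shows "(\<integral>\<^sup>+h. ennreal (potential n p2 p3 (prop_step n h (Y, D))) \<partial>edge_pmf p2 p3 exposed_edges)
     \<le> ennreal (potential n p2 p3 (Y, D) * drift_factor n p2 p3 (card D))"
proof -
  define l where "l = branching_rate n p2 p3 (card D)"
  have l_pos: "0 < l" using branching_rate_pos[OF rate_pos p3(1)] by (simp add: l_def)
  define K where "K = exp (- ln l * (real (card Y) - 2))"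
  have "(\<integral>\<^sup>+h. ennreal (potential n p2 p3 (prop_step n h (Y, D))) \<partial>edge_pmf p2 p3 exposed_edges)
      \<le> (\<integral>\<^sup>+h. ennreal K * ennreal ((1 / l) ^ card {e\<in>queried_edges. h e}) \<partial>edge_pmf p2 p3 exposed_edges)"
    using potential_step_le[of p2 p3] l_pos rate_le_1
    by (intro nn_integral_mono) (simp add: K_def l_def ennreal_leI flip: ennreal_mult)
  also have "\<dots> = ennreal K * (\<integral>\<^sup>+h. ennreal ((1 / l) ^ card {e\<in>queried_edges. h e}) \<partial>edge_pmf p2 p3 exposed_edges)"
    by (rule nn_integral_cmult) simp
  also have "\<dots> \<le> ennreal K * ennreal (exp ((1 / l - 1) * sum (edge_prob p2 p3) queried_edges))"
    unfolding edge_pmf_def using l_pos rate_le_1 p2 p3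
    by (intro mult_left_mono nn_integral_Pi_bernoulli_power_card finite_exposed_edges queried_edges_subset)
       (auto simp: l_def edge_prob_def)
  also have "(1 / l - 1) * sum (edge_prob p2 p3) queried_edges \<le> (1 / l - 1) * l"
    using sum_edge_prob_queried_edges[OF p2(1) p3(1)] l_pos rate_le_1
    by (intro mult_left_mono) (auto simp: l_def)
  also have "(1 / l - 1) * l = 1 - l" using l_pos by (simp add: field_simps)
  also have "ennreal K * ennreal (exp (1 - l)) = ennreal (exp (- ln l * (real (card Y) - 1) + (1 - l + ln l)))"
    by (simp add: K_def flip: ennreal_mult exp_add) (simp add: algebra_simps)
  also have "\<dots> \<le> ennreal (potential n p2 p3 (Y, D) * drift_factor n p2 p3 (card D))"
  proof (intro ennreal_leI)
    have "branching_rate n p2 p3 (card D - 1) \<le> l"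
      unfolding l_def by (rule branching_rate_mono[OF p3(1)]) simp
    then have "- ln l \<le> - ln (branching_rate n p2 p3 (card D - 1))"
      using branching_rate_pos[OF rate_pos p3(1)] l_pos by simp
    moreover have "1 \<le> card Y" using finite_Y active by (simp add: Suc_le_eq card_gt_0_iff)
    ultimately show "exp (- ln l * (real (card Y) - 1) + (1 - l + ln l))
        \<le> potential n p2 p3 (Y, D) * drift_factor n p2 p3 (card D)"
      using active by (simp add: potential_def drift_factor_def l_def mult_right_mono flip: exp_add)
  qed
  finally show ?thesis by (simp add: ennreal_leI mult_left_mono)
qed

lemma unexposed_edges_split:
  "unexposed_edges n D = exposed_edges \<union> unexposed_edges n (insert pivot D)"
  "exposed_edges \<inter> unexposed_edges n (insert pivot D) = {}"
  using unexposed_edges_antimono[of D "insert pivot D" n] by (auto simp: exposed_edges_def)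

text \<open>The first step only reads the exposed edges, all later steps only the remaining
  unexposed ones.\<close>
lemma prop_iter_Suc_split:
  "(prop_step n (\<lambda>e. if e \<in> exposed_edges then h1 e else h2 e) ^^ Suc j) (Y, D)
    = (prop_step n h2 ^^ j) (prop_step n h1 (Y, D))"
proof -
  let ?h = "\<lambda>e. if e \<in> exposed_edges then h1 e else h2 e"
  have "prop_step n ?h (Y, D) = prop_step n h1 (Y, D)"
    by (rule prop_step_local[OF wf active]) (auto simp: exposed_edges_def pivot_def)
  moreover have "(prop_step n ?h ^^ j) (prop_step n h1 (Y, D)) = (prop_step n h2 ^^ j) (prop_step n h1 (Y, D))"
    using unexposed_edges_split
    by (intro prop_iter_local prop_state_wf_step[OF wf]) (auto simp: prop_step_state(1))
  ultimately show ?thesis by (simp only: funpow_Suc_right comp_def)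
qed

end

lemma nn_integral_potential_iter:
  assumes p2: "0 \<le> p2" "p2 \<le> 1" and p3: "0 \<le> p3" "p3 \<le> 1"
    and rate_pos: "0 < branching_rate n p2 p3 0"
    and rate_le_1: "\<And>t. t < T \<Longrightarrow> branching_rate n p2 p3 t \<le> 1"
  shows "prop_state_wf n S \<Longrightarrow> card (snd S) + j \<le> T \<Longrightarrow>
    (\<integral>\<^sup>+H. ennreal (potential n p2 p3 ((prop_step n H ^^ j) S)) \<partial>edge_pmf p2 p3 (unexposed_edges n (snd S)))
    \<le> ennreal (potential n p2 p3 S * (\<Prod>s\<in>{card (snd S)..<card (snd S) + j}. drift_factor n p2 p3 s))"
proof (induction j arbitrary: S)
  case 0
  then show ?case by (simp add: measure_pmf.emeasure_space_1)
next
  case (Suc j)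
  obtain Y D where S: "S = (Y, D)" by fastforce
  show ?case
  proof (cases "Y = {}")
    case True
    then show ?thesis by (simp add: S prop_iter_idle prop_step_idle potential_def)
  next
    case False
    interpret active_state n Y D using Suc.prems S False by unfold_locales auto
    let ?A = exposed_edges and ?B = "unexposed_edges n (insert pivot D)"
    let ?P = "\<Prod>s\<in>{Suc (card D)..<Suc (card D) + j}. drift_factor n p2 p3 s"
    have P_nonneg: "0 \<le> ?P" by (simp add: drift_factor_def prod_nonneg)
    have IH: "(\<integral>\<^sup>+h2. ennreal (potential n p2 p3 ((prop_step n h2 ^^ j) (prop_step n h1 (Y, D)))) \<partial>edge_pmf p2 p3 ?B)
        \<le> ennreal (potential n p2 p3 (prop_step n h1 (Y, D))) * ennreal ?P" for h1
    proof -
      have "card (snd (prop_step n h1 (Y, D))) + j \<le> T"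
        using Suc.prems S by (simp add: prop_step_state(2))
      from Suc.IH[OF prop_state_wf_step[OF wf] this]
      show ?thesis by (simp only: prop_step_state(1) card_insert_pivot ennreal_mult[OF potential_nonneg P_nonneg])
    qed
    have "(\<integral>\<^sup>+H. ennreal (potential n p2 p3 ((prop_step n H ^^ Suc j) S)) \<partial>edge_pmf p2 p3 (unexposed_edges n (snd S)))
       = (\<integral>\<^sup>+h1. \<integral>\<^sup>+h2. ennreal (potential n p2 p3 ((prop_step n h2 ^^ j) (prop_step n h1 (Y, D))))
            \<partial>edge_pmf p2 p3 ?B \<partial>edge_pmf p2 p3 ?A)"
      unfolding S snd_conv unexposed_edges_split(1)
      by (subst nn_integral_edge_pmf_union[OF finite_exposed_edges finite_unexposed_edges
            unexposed_edges_split(2)]) (simp only: prop_iter_Suc_split)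
    also have "\<dots> \<le> (\<integral>\<^sup>+h1. ennreal (potential n p2 p3 (prop_step n h1 (Y, D))) * ennreal ?P \<partial>edge_pmf p2 p3 ?A)"
      by (intro nn_integral_mono IH)
    also have "\<dots> = (\<integral>\<^sup>+h1. ennreal (potential n p2 p3 (prop_step n h1 (Y, D))) \<partial>edge_pmf p2 p3 ?A) * ennreal ?P"
      by (rule nn_integral_multc) simp
    also have "\<dots> \<le> ennreal (potential n p2 p3 (Y, D) * drift_factor n p2 p3 (card D)) * ennreal ?P"
      using Suc.prems S
      by (intro mult_right_mono nn_integral_potential_step p2 p3 rate_pos rate_le_1) auto
    also have "\<dots> = ennreal (potential n p2 p3 S * (\<Prod>s\<in>{card (snd S)..<card (snd S) + Suc j}. drift_factor n p2 p3 s))"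
      using P_nonneg
      by (simp add: S prod.atLeast_Suc_lessThan potential_nonneg drift_factor_def mult.assoc
          flip: ennreal_mult)
    finally show ?thesis .
  qed
qed

lemma potential_ge_1:
  assumes p3: "0 \<le> p3" and rate_pos: "0 < branching_rate n p2 p3 0"
    and rate_le_1: "\<And>t. t < T \<Longrightarrow> branching_rate n p2 p3 t \<le> 1"
    and "1 \<le> T" "prop_state_wf n S" "card (snd S) \<le> T" "fst S \<noteq> {}"
  shows "1 \<le> potential n p2 p3 S"
proof -
  have "card (snd S) - 1 < T" using assms(4,6) by linarith
  then have "0 \<le> - ln (branching_rate n p2 p3 (card (snd S) - 1))"
    using rate_le_1 branching_rate_pos[OF rate_pos p3] by simp
  moreover have "1 \<le> card (fst S)"
    using assms(5,7) prop_state_wf_finite[of n "fst S" "snd S"] by (simp add: Suc_le_eq card_gt_0_iff)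
  ultimately show ?thesis using assms(7) by (simp add: potential_def mult_nonpos_nonneg)
qed

lemma prob_large_prop_component_le:
  assumes p2: "0 \<le> p2" "p2 \<le> 1" and p3: "0 \<le> p3" "p3 \<le> 1"
    and rate_pos: "0 < branching_rate n p2 p3 0"
    and rate_le_1: "\<And>t. t < T \<Longrightarrow> branching_rate n p2 p3 t \<le> 1"
    and "1 \<le> T" "v0 < n" "real T < x"
  shows "measure_pmf.prob (random_hypergraph n p2 p3) {H. real (card (prop_component n H v0)) \<ge> x}
     \<le> (\<Prod>s<T. drift_factor n p2 p3 s)"
proof -
  define S0 where "S0 = ({v0}, {}::nat set)"
  have wf: "prop_state_wf n S0" using assms(8) by (simp add: S0_def prop_state_wf_def)
  define E where "E = {H. real (card (prop_component n H v0)) \<ge> x}"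
  have "indicator E H \<le> ennreal (potential n p2 p3 ((prop_step n H ^^ T) S0))" for H
  proof (cases "H \<in> E")
    case True
    then have "fst ((prop_step n H ^^ T) S0) \<noteq> {}"
      using card_prop_component_le[OF assms(8)] assms(9) by (force simp: E_def S0_def)
    moreover have "card (snd ((prop_step n H ^^ T) S0)) \<le> T"
      using card_inactive_iter_le[OF wf, where H=H and j=T] by (simp add: S0_def)
    ultimately have "1 \<le> potential n p2 p3 ((prop_step n H ^^ T) S0)"
      by (intro potential_ge_1[OF p3(1) rate_pos rate_le_1 assms(7) prop_state_wf_iter[OF wf]])
    then show ?thesis using True by simp
  qed simp
  then have "emeasure (random_hypergraph n p2 p3) E
      \<le> (\<integral>\<^sup>+H. ennreal (potential n p2 p3 ((prop_step n H ^^ T) S0)) \<partial>edge_pmf p2 p3 (unexposed_edges n (snd S0)))"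
    unfolding random_hypergraph_eq_edge_pmf S0_def snd_conv
    by (simp add: nn_integral_mono flip: nn_integral_indicator)
  also have "\<dots> \<le> ennreal (\<Prod>s<T. drift_factor n p2 p3 s)"
    using nn_integral_potential_iter[OF p2 p3 rate_pos rate_le_1 wf, where j=T]
    by (simp add: S0_def potential_def atLeast0LessThan)
  finally show ?thesis
    by (simp add: E_def measure_pmf.emeasure_eq_measure drift_factor_def prod_nonneg ennreal_le_iff)
qed

definition rate_integrand :: "real \<Rightarrow> real \<Rightarrow> real \<Rightarrow> real" where
  "rate_integrand \<epsilon> r w = 1 - (1 - \<epsilon> + r * w) + ln (1 - \<epsilon> + r * w)"

definition rate_primitive :: "real \<Rightarrow> real \<Rightarrow> real \<Rightarrow> real" where
  "rate_primitive \<epsilon> r w = \<epsilon> * w - r * w\<^sup>2 / 2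
     + ((1 - \<epsilon> + r * w) * ln (1 - \<epsilon> + r * w) - (1 - \<epsilon> + r * w)) / r"

context
  fixes \<epsilon> r :: real
  assumes \<epsilon>_pos: "0 < \<epsilon>" and \<epsilon>_less_1: "\<epsilon> < 1" and r_pos: "0 < r"
begin

lemma rate_arg_pos: "0 \<le> w \<Longrightarrow> 0 < 1 - \<epsilon> + r * w"
  using \<epsilon>_less_1 r_pos by (smt (verit) mult_nonneg_nonneg)

lemma has_real_derivative_rate_primitive:
  "0 \<le> w \<Longrightarrow> (rate_primitive \<epsilon> r has_real_derivative rate_integrand \<epsilon> r w) (at w)"
  using rate_arg_pos[of w] r_pos unfolding rate_primitive_def[abs_def] rate_integrand_def
  by (auto intro!: derivative_eq_intros)

lemma rate_integrand_mono:
  assumes "0 \<le> a" "a \<le> b" "b \<le> \<epsilon> / r"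
  shows "rate_integrand \<epsilon> r a \<le> rate_integrand \<epsilon> r b"
proof -
  define la lb where "la = 1 - \<epsilon> + r * a" and "lb = 1 - \<epsilon> + r * b"
  have la: "0 < la" and lb: "0 < lb" using rate_arg_pos assms unfolding la_def lb_def by auto
  have lb_le_1: "lb \<le> 1" using assms r_pos unfolding lb_def by (simp add: field_simps)
  have "ln la - ln lb \<le> la / lb - 1"
    using la lb ln_le_minus_one[of "la / lb"] by (simp add: ln_div)
  also have "la / lb - 1 = - (r * (b - a)) / lb" using lb by (simp add: field_simps la_def lb_def)
  also have "\<dots> \<le> - (r * (b - a))"
  proof -
    have "0 \<le> r * (b - a)" using r_pos assms by simp
    then have "r * (b - a) \<le> r * (b - a) / lb" using lb lb_le_1 by (simp add: le_divide_eq mult_left_le)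
    then show ?thesis by simp
  qed
  finally show ?thesis unfolding rate_integrand_def la_def[symmetric] lb_def[symmetric]
    by (simp add: la_def lb_def algebra_simps)
qed

lemma rate_integrand_0_nonpos: "rate_integrand \<epsilon> r 0 \<le> 0"
  using \<epsilon>_pos \<epsilon>_less_1 ln_le_minus_one[of "1 - \<epsilon>"] by (simp add: rate_integrand_def)

lemma rate_primitive_diff_ge:
  assumes "0 \<le> a" "a \<le> b" "b \<le> \<epsilon> / r"
  shows "(b - a) * rate_integrand \<epsilon> r a \<le> rate_primitive \<epsilon> r b - rate_primitive \<epsilon> r a"
proof (cases "a = b")
  case False
  then have "a < b" using assms by simp
  then obtain z where z: "a < z" "z < b"
    and mvt: "rate_primitive \<epsilon> r b - rate_primitive \<epsilon> r a = (b - a) * rate_integrand \<epsilon> r z"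
    using MVT2[of a b "rate_primitive \<epsilon> r" "rate_integrand \<epsilon> r"] has_real_derivative_rate_primitive assms
    by force
  have "rate_integrand \<epsilon> r a \<le> rate_integrand \<epsilon> r z" using z assms by (intro rate_integrand_mono) auto
  then show ?thesis using \<open>a < b\<close> mvt by (simp add: mult_left_mono)
qed simp

lemma rate_primitive_eq_I_er: "rate_primitive \<epsilon> r (\<epsilon> / r) - rate_primitive \<epsilon> r 0 = I_er \<epsilon> r"
proof -
  have "1 - \<epsilon> + r * (\<epsilon> / r) = 1" using r_pos by simp
  then show ?thesis using r_pos
    by (simp add: rate_primitive_def I_er_def field_simps power2_eq_square)
qed

lemma integral_rate_integrand: "integral {0..\<epsilon>/r} (rate_integrand \<epsilon> r) = I_er \<epsilon> r"
proof -
  have "(rate_integrand \<epsilon> r has_integral I_er \<epsilon> r) {0..\<epsilon>/r}"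
    unfolding rate_primitive_eq_I_er[symmetric]
  proof (rule fundamental_theorem_of_calculus)
    show "0 \<le> \<epsilon> / r" using \<epsilon>_pos r_pos by simp
  next
    fix x assume "x \<in> {0..\<epsilon>/r}"
    then show "(rate_primitive \<epsilon> r has_vector_derivative rate_integrand \<epsilon> r x) (at x within {0..\<epsilon>/r})"
      using has_real_derivative_rate_primitive
      by (auto simp: has_real_derivative_iff_has_vector_derivative intro: has_vector_derivative_at_within)
  qed
  then show ?thesis by (rule integral_unique)
qed

lemma rate_primitive_tail_ge:
  assumes "0 \<le> a" "a \<le> \<epsilon> / r" "\<epsilon> / r - a \<le> \<delta>"
  shows "\<delta> * rate_integrand \<epsilon> r 0 \<le> rate_primitive \<epsilon> r (\<epsilon> / r) - rate_primitive \<epsilon> r a"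
proof -
  have "\<delta> * rate_integrand \<epsilon> r 0 \<le> (\<epsilon> / r - a) * rate_integrand \<epsilon> r 0"
    using assms(3) rate_integrand_0_nonpos by (rule mult_right_mono_neg)
  also have "\<dots> \<le> (\<epsilon> / r - a) * rate_integrand \<epsilon> r a"
    using assms by (intro mult_left_mono rate_integrand_mono) auto
  also have "\<dots> \<le> rate_primitive \<epsilon> r (\<epsilon> / r) - rate_primitive \<epsilon> r a"
    using assms by (intro rate_primitive_diff_ge) auto
  finally show ?thesis .
qed

text \<open>The left Riemann sum of the increasing integrand with mesh \<open>1/L\<close>, up to the last grid
  point \<open>T/L\<close> below \<open>\<epsilon>/r\<close>.\<close>
lemma sum_rate_integrand_le:
  assumes L: "0 < L" and T: "real T \<le> \<epsilon> / r * L" "\<epsilon> / r * L < real T + 1"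
  shows "(\<Sum>s<T. rate_integrand \<epsilon> r (real s / L)) \<le> L * I_er \<epsilon> r - rate_integrand \<epsilon> r 0"
proof -
  let ?F = "\<lambda>s. rate_primitive \<epsilon> r (real s / L)"
  have T_L: "real T / L \<le> \<epsilon> / r" using T L by (simp add: divide_le_eq)
  have "rate_integrand \<epsilon> r (real s / L) \<le> L * (?F (Suc s) - ?F s)" if "s < T" for s
  proof -
    have "real (Suc s) / L \<le> \<epsilon> / r"
      using that L T_L by (smt (verit) divide_right_mono of_nat_less_iff of_nat_Suc Suc_leI of_nat_le_iff)
    then have "(real (Suc s) / L - real s / L) * rate_integrand \<epsilon> r (real s / L) \<le> ?F (Suc s) - ?F s"
      using L by (intro rate_primitive_diff_ge) (auto simp: divide_right_mono)
    then show ?thesis using L by (simp add: field_simps)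
  qed
  then have "(\<Sum>s<T. rate_integrand \<epsilon> r (real s / L)) \<le> (\<Sum>s<T. L * (?F (Suc s) - ?F s))"
    by (intro sum_mono) auto
  also have "\<dots> = L * (?F T - ?F 0)"
    using sum_lessThan_telescope[of ?F T] by (simp only: sum_distrib_left[symmetric])
  also have "\<dots> \<le> L * (I_er \<epsilon> r - rate_integrand \<epsilon> r 0 / L)"
  proof -
    have "(\<epsilon> / r * L - real T) / L \<le> 1 / L" using T L by (intro divide_right_mono) auto
    then have "\<epsilon> / r - real T / L \<le> 1 / L" using L by (simp add: diff_divide_distrib)
    then have "rate_integrand \<epsilon> r 0 / L \<le> rate_primitive \<epsilon> r (\<epsilon> / r) - ?F T"
      using rate_primitive_tail_ge[of "real T / L" "1 / L"] T_L L by simp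
    then show ?thesis using L rate_primitive_eq_I_er by (intro mult_left_mono) auto
  qed
  finally show ?thesis using L by (simp add: right_diff_distrib)
qed

end

lemma branching_rate_scaled:
  assumes "2 \<le> n"
  shows "branching_rate n ((1 - \<epsilon>) / real n) (r / (real n * ln (real n))) s
    = 1 - \<epsilon> + r * (real s / ln (real n))"
proof -
  have "0 < ln (real n)" using assms by simp
  then show ?thesis using assms by (simp add: branching_rate_def field_simps)
qed

lemma prod_drift_factor_le_powr:
  fixes \<epsilon> r :: real
  assumes \<epsilon>: "0 < \<epsilon>" "\<epsilon> < 1" and r: "0 < r" and n: "2 \<le> n"
    and T: "real T \<le> \<epsilon> / r * ln (real n)" "\<epsilon> / r * ln (real n) < real T + 1"
  shows "(\<Prod>s<T. drift_factor n ((1 - \<epsilon>) / real n) (r / (real n * ln (real n))) s)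
    \<le> real n powr (I_er \<epsilon> r - rate_integrand \<epsilon> r 0 / ln (real n))"
proof -
  have L_pos: "0 < ln (real n)" using n by simp
  have "(\<Prod>s<T. drift_factor n ((1 - \<epsilon>) / real n) (r / (real n * ln (real n))) s)
      = exp (\<Sum>s<T. rate_integrand \<epsilon> r (real s / ln (real n)))"
    by (simp add: exp_sum drift_factor_def branching_rate_scaled[OF n] rate_integrand_def)
  also have "\<dots> \<le> exp (ln (real n) * I_er \<epsilon> r - rate_integrand \<epsilon> r 0)"
    using sum_rate_integrand_le[OF \<epsilon> r L_pos T] by simp
  also have "\<dots> = real n powr (I_er \<epsilon> r - rate_integrand \<epsilon> r 0 / ln (real n))"
    using n L_pos by (simp add: powr_def field_simps)
  finally show ?thesis .
qed

lemma prob_large_prop_component_powr: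
  fixes \<epsilon> r K0 :: real
  assumes \<epsilon>: "0 < \<epsilon>" "\<epsilon> < 1" and r: "0 < r" and K0: "\<epsilon> / r < K0"
    and n: "2 \<le> n" and L_large: "max r (r / \<epsilon>) \<le> ln (real n)" and "v0 < n"
  shows "measure_pmf.prob (random_hypergraph n ((1 - \<epsilon>) / real n) (r / (real n * ln (real n))))
      {H. real (card (prop_component n H v0)) \<ge> K0 * ln (real n)}
    \<le> real n powr (I_er \<epsilon> r - rate_integrand \<epsilon> r 0 / ln (real n))"
proof -
  define L where "L = ln (real n)"
  define p2 where "p2 = (1 - \<epsilon>) / real n"
  define p3 where "p3 = r / (real n * L)"
  define T where "T = nat \<lfloor>\<epsilon> / r * L\<rfloor>"
  have L_pos: "0 < L" using n by (simp add: L_def)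
  have rate: "branching_rate n p2 p3 s = 1 - \<epsilon> + r * (real s / L)" for s
    using branching_rate_scaled[OF n] by (simp add: p2_def p3_def L_def)
  have T_le: "real T \<le> \<epsilon> / r * L" and T_gt: "\<epsilon> / r * L < real T + 1"
  proof -
    have "0 \<le> \<epsilon> / r * L" using \<epsilon> r L_pos by simp
    then show "real T \<le> \<epsilon> / r * L" "\<epsilon> / r * L < real T + 1" unfolding T_def by linarith+
  qed
  have "r / \<epsilon> \<le> L" "r \<le> L" using L_large by (auto simp: L_def)
  then have "1 \<le> \<epsilon> / r * L" using \<epsilon> r by (simp add: field_simps)
  then have T_ge_1: "1 \<le> T" unfolding T_def by linarith
  have p2: "0 \<le> p2" "p2 \<le> 1" using \<epsilon> n by (auto simp: p2_def field_simps)
  have "L \<le> real n * L" using n L_pos by (simp add: mult_le_cancel_right1)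
  then have "r \<le> real n * L" using \<open>r \<le> L\<close> by linarith
  then have p3: "0 \<le> p3" "p3 \<le> 1" using r L_pos n by (auto simp: p3_def divide_le_eq)
  have rate_le_1: "branching_rate n p2 p3 t \<le> 1" if "t < T" for t
  proof -
    have "real t \<le> \<epsilon> / r * L" using that T_le by linarith
    then show ?thesis using r L_pos by (simp add: rate field_simps)
  qed
  have "\<epsilon> / r * L < K0 * L" using K0 L_pos by (rule mult_strict_right_mono)
  then have "real T < K0 * L" using T_le by linarith
  then have "measure_pmf.prob (random_hypergraph n p2 p3)
      {H. real (card (prop_component n H v0)) \<ge> K0 * L} \<le> (\<Prod>s<T. drift_factor n p2 p3 s)"
    using \<epsilon> by (intro prob_large_prop_component_le[OF p2 p3 _ rate_le_1 T_ge_1 \<open>v0 < n\<close>]) (auto simp: rate)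
  also have "\<dots> \<le> real n powr (I_er \<epsilon> r - rate_integrand \<epsilon> r 0 / L)"
    using prod_drift_factor_le_powr[OF \<epsilon> r n] T_le T_gt by (simp add: p2_def p3_def L_def)
  finally show ?thesis by (simp add: p2_def p3_def L_def)
qed

lemma eventually_prob_large_prop_component_powr:
  fixes \<epsilon> r K0 :: real
  assumes "0 < \<epsilon>" "\<epsilon> < 1" "0 < r" "\<epsilon> / r < K0"
  shows "\<forall>\<^sub>F n in sequentially. \<forall>v0<n.
    measure_pmf.prob (random_hypergraph n ((1 - \<epsilon>) / real n) (r / (real n * ln (real n))))
      {H. real (card (prop_component n H v0)) \<ge> K0 * ln (real n)}
    \<le> real n powr (I_er \<epsilon> r - rate_integrand \<epsilon> r 0 / ln (real n))"
proof -
  have "filterlim (\<lambda>n::nat. ln (real n)) at_top sequentially"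
    by (rule filterlim_compose[OF ln_at_top filterlim_real_sequentially])
  then have "\<forall>\<^sub>F n in sequentially. max r (r / \<epsilon>) \<le> ln (real n)"
    unfolding filterlim_at_top by blast
  moreover have "\<forall>\<^sub>F n in sequentially. 2 \<le> n" by (rule eventually_ge_at_top)
  ultimately show ?thesis
  proof eventually_elim
    case (elim n)
    then show ?case by (intro allI impI prob_large_prop_component_powr[OF assms]) auto
  qed
qed

lemma prob_exists_tendsto_0:
  fixes M :: "nat \<Rightarrow> 'a pmf" and P :: "nat \<Rightarrow> nat \<Rightarrow> 'a \<Rightarrow> bool"
  assumes g: "g \<longlonglongrightarrow> 0" and I: "I < -1"
    and bound: "\<forall>\<^sub>F n in sequentially. \<forall>v<n. measure_pmf.prob (M n) {x. P n v x} \<le> real n powr (I + g n)"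
  shows "(\<lambda>n. measure_pmf.prob (M n) {x. \<exists>v<n. P n v x}) \<longlonglongrightarrow> 0"
proof -
  define \<delta> where "\<delta> = - (1 + I) / 2"
  have \<delta>_pos: "0 < \<delta>" using I by (simp add: \<delta>_def)
  have upper: "\<forall>\<^sub>F n in sequentially. measure_pmf.prob (M n) {x. \<exists>v<n. P n v x} \<le> real n powr (- \<delta>)"
    using bound order_tendstoD(2)[OF g \<delta>_pos] eventually_ge_at_top[of 1]
  proof eventually_elim
    case (elim n)
    have "{x. \<exists>v<n. P n v x} = (\<Union>v\<in>{..<n}. {x. P n v x})" by auto
    then have "measure_pmf.prob (M n) {x. \<exists>v<n. P n v x} \<le> (\<Sum>v<n. measure_pmf.prob (M n) {x. P n v x})"
      using measure_UNION_le[of "{..<n}" "\<lambda>v. {x. P n v x}" "measure_pmf (M n)"] by simp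
    also have "\<dots> \<le> (\<Sum>v<n. real n powr (I + g n))"
      using elim(1) by (intro sum_mono) auto
    also have "\<dots> = real n powr (1 + (I + g n))"
      using elim(3) by (simp add: powr_add)
    also have "\<dots> \<le> real n powr (- \<delta>)"
    proof (rule powr_mono)
      show "1 + (I + g n) \<le> - \<delta>" using elim(2) by (simp add: \<delta>_def field_simps)
      show "1 \<le> real n" using elim(3) by simp
    qed
    finally show ?case .
  qed
  have lim: "(\<lambda>n::nat. real n powr (- \<delta>)) \<longlonglongrightarrow> 0"
    using \<delta>_pos by (intro tendsto_neg_powr filterlim_real_sequentially) simp
  show ?thesis by (rule tendsto_sandwich[OF _ upper tendsto_const lim]) simp
qed

theorem proposition1:
  fixes \<epsilon> r :: real
  assumes "0 < \<epsilon>" "\<epsilon> < 1" "0 < r"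
  defines "p2 \<equiv> (\<lambda>n::nat. (1 - \<epsilon>) / real n)"
      and "p3 \<equiv> (\<lambda>n::nat. r / (real n * ln (real n)))"
      and "K0 \<equiv> max 1 (2 * (9 + \<epsilon>) / r)"
      and "lam \<equiv> (\<lambda>x::real. 1 - \<epsilon> + r * x)"
  shows "I_er \<epsilon> r = integral {0..\<epsilon>/r} (\<lambda>\<omega>. 1 - lam \<omega> + ln (lam \<omega>))
    \<and> (\<exists>g :: nat \<Rightarrow> real. (g \<longlonglongrightarrow> 0) \<and>
         (\<forall>\<^sub>F n in sequentially. \<forall>v0<n.
            measure_pmf.prob (random_hypergraph n (p2 n) (p3 n))
              {H. real (card (prop_component n H v0)) \<ge> K0 * ln (real n)}
            \<le> real n powr (I_er \<epsilon> r + g n)))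
    \<and> (I_er \<epsilon> r < -1 \<longrightarrow>
         (\<lambda>n. measure_pmf.prob (random_hypergraph n (p2 n) (p3 n))
              {H. \<exists>v<n. real (card (prop_component n H v)) \<ge> K0 * ln (real n)})
         \<longlonglongrightarrow> 0)"
proof -
  have "\<epsilon> / r < 2 * (9 + \<epsilon>) / r" using assms by (intro divide_strict_right_mono) auto
  then have K0: "\<epsilon> / r < K0" unfolding K0_def by linarith
  define g where "g n = - rate_integrand \<epsilon> r 0 / ln (real n)" for n :: nat
  have g: "g \<longlonglongrightarrow> 0"
    unfolding g_def by (intro tendsto_divide_0[OF tendsto_const] filterlim_at_top_imp_at_infinity
        filterlim_compose[OF ln_at_top filterlim_real_sequentially])
  have bound: "\<forall>\<^sub>F n in sequentially. \<forall>v0<n.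
      measure_pmf.prob (random_hypergraph n (p2 n) (p3 n))
        {H. real (card (prop_component n H v0)) \<ge> K0 * ln (real n)}
      \<le> real n powr (I_er \<epsilon> r + g n)"
    using eventually_prob_large_prop_component_powr[OF assms(1-3) K0]
    unfolding p2_def p3_def g_def by simp
  show ?thesis
  proof (intro conjI impI exI[of _ g] g bound)
    have "(\<lambda>\<omega>. 1 - lam \<omega> + ln (lam \<omega>)) = rate_integrand \<epsilon> r"
      by (simp add: lam_def rate_integrand_def fun_eq_iff)
    then show "I_er \<epsilon> r = integral {0..\<epsilon>/r} (\<lambda>\<omega>. 1 - lam \<omega> + ln (lam \<omega>))"
      using integral_rate_integrand[OF assms(1-3)] by simp
  next
    assume "I_er \<epsilon> r < -1"
    from prob_exists_tendsto_0[OF g this bound]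
    show "(\<lambda>n. measure_pmf.prob (random_hypergraph n (p2 n) (p3 n))
        {H. \<exists>v<n. real (card (prop_component n H v)) \<ge> K0 * ln (real n)}) \<longlonglongrightarrow> 0" .
  qed
qed

end
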